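(* Let $\mathcal C$ be an immersed curve and $P_1,P_2,\dots,P_N$ distinct points on $\mathcal C$ listed in order along $\mathcal C$. Assume there are positive constants $A_0$ and $R_0$ such that (a) for all $j$ with $1\le j\le N-2$, $\frac{A_0}{2}\le\mathrm{Area}(\triangle P_jP_{j+1}P_{j+2})$; (b) for each $j$ with $1\le j\le N-2$ the points $P_j,P_{j+1},P_{j+2}$ lie on a circle of radius $\ge R_0$. Then $$N<2+\frac{\mathrm{Length}(\mathcal C)}{(A_0R_0)^{1/3}}.$$ *)

theory Defs
  imports "HOL-Analysis.Analysis"
begin

definition immersed_curve :: "(real \<Rightarrow> real^2) \<Rightarrow> (real \<Rightarrow> real^2) \<Rightarrow> real \<Rightarrow> real \<Rightarrow> bool" where
  "immersed_curve \<gamma> \<gamma>' a b \<longleftrightarrow> a < b \<and>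
     (\<forall>t\<in>{a..b}. (\<gamma> has_vector_derivative \<gamma>' t) (at t within {a..b}) \<and> \<gamma>' t \<noteq> 0) \<and>
     continuous_on {a..b} \<gamma>'"

definition curve_length :: "(real \<Rightarrow> real^2) \<Rightarrow> real \<Rightarrow> real \<Rightarrow> real" where
  "curve_length \<gamma>' a b = integral {a..b} (\<lambda>t. norm (\<gamma>' t))"

definition tri_area :: "real^2 \<Rightarrow> real^2 \<Rightarrow> real^2 \<Rightarrow> real" where
  "tri_area P Q R = \<bar>(Q$1 - P$1) * (R$2 - P$2) - (R$1 - P$1) * (Q$2 - P$2)\<bar> / 2"

end

theory Submission
  imports Defs
begin

text \<open>For three points on a circle of radius \<open>r\<close> the product of the side lengths is
  \<open>4 r\<close> times the area of the triangle. Hence if two consecutive chords \<open>x, y\<close> of the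
  inscribed polygon have \<open>r \<ge> R\<^sub>0\<close> and area \<open>\<ge> A\<^sub>0/2\<close>, then
  \<open>2 A\<^sub>0 R\<^sub>0 \<le> x y z \<le> x y (x + y) \<le> (x + y)\<^sup>3 / 4\<close>, where \<open>z \<le> x + y\<close> is the third side,
  so \<open>x + y \<ge> 2 (A\<^sub>0 R\<^sub>0)\<^bsup>1/3\<^esup>\<close>. Summing over the \<open>N - 2\<close> pairs of consecutive chords counts
  every chord at most twice and the first one only once, so \<open>(N - 2) (A\<^sub>0 R\<^sub>0)\<^bsup>1/3\<^esup>\<close> is
  strictly less than the length of the polygon, which is at most the length of the curve.\<close>

lemma dist_vec2_power2: "(dist (x::real^2) y)\<^sup>2 = (x$1 - y$1)\<^sup>2 + (x$2 - y$2)\<^sup>2"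
  by (simp add: dist_norm norm_eq_sqrt_inner inner_vec_def sum_2 power2_eq_square)

lemma circumradius_identity:
  fixes x1 y1 x2 y2 x3 y3 u v r :: real
  assumes "(x1 - u)\<^sup>2 + (y1 - v)\<^sup>2 = r\<^sup>2" "(x2 - u)\<^sup>2 + (y2 - v)\<^sup>2 = r\<^sup>2" "(x3 - u)\<^sup>2 + (y3 - v)\<^sup>2 = r\<^sup>2"
  shows "((x1 - x2)\<^sup>2 + (y1 - y2)\<^sup>2) * ((x2 - x3)\<^sup>2 + (y2 - y3)\<^sup>2) * ((x1 - x3)\<^sup>2 + (y1 - y3)\<^sup>2)
    = 4 * r\<^sup>2 * ((x2 - x1) * (y3 - y1) - (x3 - x1) * (y2 - y1))\<^sup>2"
  using assms by algebra

lemma concyclic_sides_product: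
  fixes p q s c :: "real^2"
  assumes "dist p c = r" "dist q c = r" "dist s c = r" "r \<ge> 0"
  shows "dist p q * dist q s * dist p s = 4 * r * tri_area p q s"
proof -
  have on_circle: "(x$1 - c$1)\<^sup>2 + (x$2 - c$2)\<^sup>2 = r\<^sup>2" if "dist x c = r" for x
    using that dist_vec2_power2[of x c] by simp
  have "(dist p q * dist q s * dist p s)\<^sup>2 = (dist p q)\<^sup>2 * (dist q s)\<^sup>2 * (dist p s)\<^sup>2"
    by (simp add: power_mult_distrib)
  also have "\<dots> = 4 * r\<^sup>2 * ((q$1 - p$1) * (s$2 - p$2) - (s$1 - p$1) * (q$2 - p$2))\<^sup>2"
    unfolding dist_vec2_power2
    by (rule circumradius_identity[OF on_circle on_circle on_circle]) (fact assms)+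
  also have "\<dots> = (4 * r * tri_area p q s)\<^sup>2"
    by (simp add: tri_area_def power_mult_distrib power_divide)
  finally have "(dist p q * dist q s * dist p s)\<^sup>2 = (4 * r * tri_area p q s)\<^sup>2" .
  moreover have "0 \<le> 4 * r * tri_area p q s"
    using assms(4) by (simp add: tri_area_def)
  ultimately show ?thesis
    by (simp add: power2_eq_iff_nonneg)
qed

lemma four_mul_le_sum_cube:
  fixes x y z :: real
  assumes "0 \<le> x" "0 \<le> y" "z \<le> x + y"
  shows "4 * (x * y * z) \<le> (x + y) ^ 3"
proof -
  have "4 * (x * y * z) \<le> 4 * (x * y * (x + y))"
    using assms by (simp add: mult_left_mono)
  also have "\<dots> = (x + y) ^ 3 - (x - y)\<^sup>2 * (x + y)"
    by (simp add: power2_eq_square power3_eq_cube algebra_simps)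
  also have "\<dots> \<le> (x + y) ^ 3"
    using assms by simp
  finally show ?thesis .
qed

lemma concyclic_consecutive_chords_lower_bound:
  fixes p q s c :: "real^2"
  assumes "0 < A\<^sub>0" "0 < R\<^sub>0" "A\<^sub>0 / 2 \<le> tri_area p q s"
    and "R\<^sub>0 \<le> r" "dist p c = r" "dist q c = r" "dist s c = r"
  shows "2 * (A\<^sub>0 * R\<^sub>0) powr (1/3) \<le> dist p q + dist q s"
proof -
  define k where "k = root 3 (A\<^sub>0 * R\<^sub>0)"
  have k_cube: "k ^ 3 = A\<^sub>0 * R\<^sub>0" and "0 \<le> k"
    unfolding k_def using assms(1,2) by simp_all
  have "2 * A\<^sub>0 * R\<^sub>0 = 4 * R\<^sub>0 * (A\<^sub>0 / 2)"
    by simp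
  also have "\<dots> \<le> 4 * r * tri_area p q s"
    using assms by (intro mult_mono) auto
  also have "\<dots> = dist p q * dist q s * dist p s"
    using assms by (intro concyclic_sides_product[symmetric]) auto
  finally have sides: "2 * A\<^sub>0 * R\<^sub>0 \<le> dist p q * dist q s * dist p s" .
  have "(2 * k) ^ 3 = 4 * (2 * A\<^sub>0 * R\<^sub>0)"
    using k_cube by (simp add: power_mult_distrib)
  also have "\<dots> \<le> 4 * (dist p q * dist q s * dist p s)"
    using sides by linarith
  also have "\<dots> \<le> (dist p q + dist q s) ^ 3"
    by (intro four_mul_le_sum_cube dist_triangle zero_le_dist)
  finally have "(2 * k) ^ 3 \<le> (dist p q + dist q s) ^ 3" .
  then have "2 * k \<le> dist p q + dist q s"
    using \<open>0 \<le> k\<close> power_mono_iff[of "2 * k" "dist p q + dist q s" 3] by simp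
  then show ?thesis
    unfolding k_def using assms(1,2) by (simp add: root_powr_inverse)
qed

lemma sum_consecutive_pairs:
  fixes d :: "nat \<Rightarrow> 'a::comm_semiring_1"
  shows "(\<Sum>j=1..n. d j + d (Suc j)) + d 1 + d (Suc n) = 2 * (\<Sum>j=1..Suc n. d j)"
proof (induction n)
  case (Suc n)
  have "(\<Sum>j=1..Suc n. d j + d (Suc j)) + d 1 + d (Suc (Suc n))
      = ((\<Sum>j=1..n. d j + d (Suc j)) + d 1 + d (Suc n)) + 2 * d (Suc (Suc n))"
    by (simp add: algebra_simps mult_2)
  also have "\<dots> = 2 * (\<Sum>j=1..Suc (Suc n). d j)"
    unfolding Suc.IH by (simp add: distrib_left)
  finally show ?case .
qed (simp add: mult_2)

lemma sum_gt_of_consecutive_pairs_ge: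
  fixes d :: "nat \<Rightarrow> real"
  assumes pairs: "\<And>j. j \<in> {1..n} \<Longrightarrow> 2 * k \<le> d j + d (Suc j)"
    and "0 < d 1" "\<And>j. 0 \<le> d j"
  shows "real n * k < (\<Sum>j=1..Suc n. d j)"
proof -
  have "2 * (real n * k) = (\<Sum>j=1..n. 2 * k)"
    by simp
  also have "\<dots> \<le> (\<Sum>j=1..n. d j + d (Suc j))"
    by (rule sum_mono) (rule pairs)
  also have "\<dots> < 2 * (\<Sum>j=1..Suc n. d j)"
    using sum_consecutive_pairs[of d n] assms(2) assms(3)[of "Suc n"] by linarith
  finally show ?thesis
    by simp
qed

lemma immersed_curve_speed_integrable:
  assumes "immersed_curve \<gamma> \<gamma>' a b" "a \<le> s" "u \<le> b"
  shows "(\<lambda>t. norm (\<gamma>' t)) integrable_on {s..u}"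
proof (rule integrable_continuous_interval)
  have cont: "continuous_on {a..b} \<gamma>'"
    using assms(1) by (simp add: immersed_curve_def)
  show "continuous_on {s..u} (\<lambda>t. norm (\<gamma>' t))"
    using assms(2,3) by (intro continuous_on_norm continuous_on_subset[OF cont]) auto
qed

lemma curve_length_nonneg:
  assumes "immersed_curve \<gamma> \<gamma>' a b" "a \<le> s" "u \<le> b"
  shows "0 \<le> curve_length \<gamma>' s u"
  unfolding curve_length_def
  using assms by (intro integral_nonneg immersed_curve_speed_integrable) auto

lemma curve_length_combine:
  assumes "immersed_curve \<gamma> \<gamma>' a b" "a \<le> s" "s \<le> u" "u \<le> v" "v \<le> b"
  shows "curve_length \<gamma>' s u + curve_length \<gamma>' u v = curve_length \<gamma>' s v"
  unfolding curve_length_def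
  using assms by (intro Henstock_Kurzweil_Integration.integral_combine immersed_curve_speed_integrable) auto

lemma curve_length_mono:
  assumes curve: "immersed_curve \<gamma> \<gamma>' a b" and "a \<le> s" "s \<le> u" "u \<le> b"
  shows "curve_length \<gamma>' s u \<le> curve_length \<gamma>' a b"
proof -
  have "curve_length \<gamma>' a b = curve_length \<gamma>' a s + curve_length \<gamma>' s b"
    using assms by (intro curve_length_combine[OF curve, symmetric]) auto
  also have "curve_length \<gamma>' s b = curve_length \<gamma>' s u + curve_length \<gamma>' u b"
    using assms by (intro curve_length_combine[OF curve, symmetric]) auto
  finally show ?thesis
    using assms curve_length_nonneg[OF curve, of a s] curve_length_nonneg[OF curve, of u b]
    by linarith
qed

lemma immersed_curve_dist_le_length:
  assumes curve: "immersed_curve \<gamma> \<gamma>' a b" and "a \<le> s" "s \<le> u" "u \<le> b"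
  shows "dist (\<gamma> s) (\<gamma> u) \<le> curve_length \<gamma>' s u"
proof -
  have vector_derivative: "(\<gamma> has_vector_derivative \<gamma>' x) (at x within {s..u})"
    if "x \<in> {s..u}" for x
  proof (rule has_vector_derivative_within_subset)
    show "(\<gamma> has_vector_derivative \<gamma>' x) (at x within {a..b})"
      using assms that by (simp add: immersed_curve_def)
    show "{s..u} \<subseteq> {a..b}"
      using assms by auto
  qed
  have ftc: "(\<gamma>' has_integral (\<gamma> u - \<gamma> s)) {s..u}"
    by (rule fundamental_theorem_of_calculus[OF assms(3) vector_derivative])
  have "dist (\<gamma> s) (\<gamma> u) = norm (integral {s..u} \<gamma>')"
    using integral_unique[OF ftc] by (simp add: dist_norm norm_minus_commute)
  also have "\<dots> \<le> curve_length \<gamma>' s u"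
    unfolding curve_length_def
    using assms
    by (intro integral_norm_bound_integral has_integral_integrable[OF ftc]
        immersed_curve_speed_integrable[OF curve]) auto
  finally show ?thesis .
qed

lemma inscribed_polygon_length_le:
  assumes curve: "immersed_curve \<gamma> \<gamma>' a b" and "m \<le> n"
    and "t ` {m..n} \<subseteq> {a..b}" and "mono_on {m..n} t"
  shows "(\<Sum>j=m..<n. dist (\<gamma> (t j)) (\<gamma> (t (Suc j)))) \<le> curve_length \<gamma>' (t m) (t n)"
  using assms(2-)
proof (induction n rule: nat_induct_at_least)
  case base
  then show ?case
    using curve by (auto intro: curve_length_nonneg)
next
  case (Suc n)
  have t_mono: "mono_on {m..Suc n} t"
    by (fact Suc.prems)
  have "t m \<in> {a..b}" "t (Suc n) \<in> {a..b}"
    by (intro subsetD[OF Suc.prems(1)] imageI; use Suc.hyps in simp)+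
  moreover have "t m \<le> t n" "t n \<le> t (Suc n)"
    by (intro mono_onD[OF t_mono]; use Suc.hyps in simp)+
  ultimately have t: "a \<le> t m" "t m \<le> t n" "t n \<le> t (Suc n)" "t (Suc n) \<le> b"
    by auto
  have sub: "{m..n} \<subseteq> {m..Suc n}"
    by auto
  have "(\<Sum>j=m..<Suc n. dist (\<gamma> (t j)) (\<gamma> (t (Suc j))))
      = (\<Sum>j=m..<n. dist (\<gamma> (t j)) (\<gamma> (t (Suc j)))) + dist (\<gamma> (t n)) (\<gamma> (t (Suc n)))"
    using Suc.hyps by simp
  also have "\<dots> \<le> curve_length \<gamma>' (t m) (t n) + dist (\<gamma> (t n)) (\<gamma> (t (Suc n)))"
    using Suc.IH[OF subset_trans[OF image_mono[OF sub] Suc.prems(1)] mono_on_subset[OF t_mono sub]]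
    by simp
  also have "\<dots> \<le> curve_length \<gamma>' (t m) (t n) + curve_length \<gamma>' (t n) (t (Suc n))"
    using t by (intro add_left_mono immersed_curve_dist_le_length[OF curve]) auto
  also have "\<dots> = curve_length \<gamma>' (t m) (t (Suc n))"
    using t by (intro curve_length_combine[OF curve]) auto
  finally show ?case .
qed

theorem theorem3p3:
  fixes \<gamma> \<gamma>' :: "real \<Rightarrow> real^2" and a b :: real
    and P :: "nat \<Rightarrow> real^2" and t :: "nat \<Rightarrow> real" and N :: nat and A\<^sub>0 R\<^sub>0 :: real
  assumes curve: "immersed_curve \<gamma> \<gamma>' a b"
    and on_curve: "\<forall>j\<in>{1..N}. t j \<in> {a..b} \<and> P j = \<gamma> (t j)"
    and ordered: "\<forall>i j. 1 \<le> i \<and> i < j \<and> j \<le> N \<longrightarrow> t i < t j"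
    and distinct: "inj_on P {1..N}"
    and A0pos: "A\<^sub>0 > 0" and R0pos: "R\<^sub>0 > 0"
    and area: "\<forall>j. 1 \<le> j \<and> j + 2 \<le> N \<longrightarrow> A\<^sub>0 / 2 \<le> tri_area (P j) (P (j+1)) (P (j+2))"
    and circle: "\<forall>j. 1 \<le> j \<and> j + 2 \<le> N \<longrightarrow>
        (\<exists>c r. r \<ge> R\<^sub>0 \<and> dist (P j) c = r \<and> dist (P (j+1)) c = r \<and> dist (P (j+2)) c = r)"
  shows "real N < 2 + curve_length \<gamma>' a b / (A\<^sub>0 * R\<^sub>0) powr (1/3)"
proof (cases "N < 2")
  case True
  have "0 \<le> curve_length \<gamma>' a b / (A\<^sub>0 * R\<^sub>0) powr (1/3)"
    by (intro divide_nonneg_nonneg curve_length_nonneg[OF curve]) auto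
  moreover have "real N < 2"
    using True by simp
  ultimately show ?thesis
    by linarith
next
  case False
  define k where "k = (A\<^sub>0 * R\<^sub>0) powr (1/3)"
  define d where "d j = dist (P j) (P (Suc j))" for j
  have k_pos: "0 < k"
    unfolding k_def using A0pos R0pos by simp
  have t_mono: "mono_on {1..N} t"
    using ordered by (intro strict_mono_on_imp_mono_on strict_mono_onI) auto
  have "2 * k \<le> d j + d (Suc j)" if "j \<in> {1..N - 2}" for j
  proof -
    have j: "1 \<le> j \<and> j + 2 \<le> N"
      using that by auto
    with circle obtain c r
      where "R\<^sub>0 \<le> r" "dist (P j) c = r" "dist (P (j+1)) c = r" "dist (P (j+2)) c = r"
      by blast
    then show ?thesis
      unfolding k_def d_def using area A0pos R0pos j
      by (simp add: concyclic_consecutive_chords_lower_bound numeral_2_eq_2)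
  qed
  moreover have "0 < d 1"
    using False inj_onD[OF distinct, of 1 2] by (auto simp: d_def numeral_2_eq_2)
  ultimately have "real (N - 2) * k < (\<Sum>j=1..Suc (N - 2). d j)"
    by (intro sum_gt_of_consecutive_pairs_ge) (auto simp: d_def)
  also have "\<dots> = (\<Sum>j=1..<N. dist (\<gamma> (t j)) (\<gamma> (t (Suc j))))"
    using False on_curve by (intro sum.cong) (auto simp: d_def)
  also have "\<dots> \<le> curve_length \<gamma>' (t 1) (t N)"
    using False on_curve t_mono by (intro inscribed_polygon_length_le[OF curve]) auto
  also have "\<dots> \<le> curve_length \<gamma>' a b"
    using False on_curve t_mono by (intro curve_length_mono[OF curve] mono_onD[OF t_mono]) auto
  finally have "real (N - 2) < curve_length \<gamma>' a b / k"
    using k_pos by (simp add: pos_less_divide_eq)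
  then show ?thesis
    using False by (simp add: k_def of_nat_diff)
qed

end
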